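(* Let $H\subset\mathrm{PGL}(2,\mathbb{C})=\mathrm{Aut}(\mathbb{P}^1)$ be a finite subgroup, let $G=\pi^{-1}(H)$ where $\pi\colon\mathrm{SL}(2,\mathbb{C})\to\mathrm{PGL}(2,\mathbb{C})$ is the canonical surjection, and let $\Lambda\subset\mathbb{P}^1$ be a non-empty finite $H$-invariant subset. (1) There exist homogeneous polynomials $f_1,f_2\in\mathbb{C}[x,y]$ of the same degree such that $(f_1,f_2)$ is an endomorphism of $\mathbb{A}^2$ fixed by $G$ and $\Lambda=\{[x:y]\in\mathbb{P}^1\mid f_1(x,y)y-f_2(x,y)x=0\}$. (2) For every pair $(f_1,f_2)$ as in (1), the morphism $\delta\colon\mathbb{P}^1\to\mathbb{P}^1$ defined by $[x:y]\mapsto[f_1(x,y):f_2(x,y)]$ (after cancelling the common factor of $f_1,f_2$) is $H$-equivariant. (3) There exists a pair $(f_1,f_2)$ as in (1) such that moreover $\Lambda=\{q\in\mathbb{P}^1\mid\delta(q)=q\}$. If $\Lambda$ consists of exactly one $H$-orbit, then this equality holds for every pair $(f_1,f_2)$ as in (1).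
   Context: $\mathrm{SL}(2,\mathbb{C})$ acts on $\mathrm{End}(\mathbb{A}^2)=\mathbb{C}[x,y]\times\mathbb{C}[x,y]$ by $g\cdot F=g\circ F\circ g^{-1}$, where $g$ is viewed as a linear automorphism of $\mathbb{A}^2$ and $F=(f_1,f_2)$ means $F(x,y)=(f_1(x,y),f_2(x,y))$; "$F$ fixed by $G$" means $g\cdot F=F$ for all $g\in G$. $\mathrm{PGL}(2,\mathbb{C})$ acts on $\mathbb{P}^1$ in the standard way. *)

theory Defs
  imports "HOL-Analysis.Analysis" "HOL-Computational_Algebra.Polynomial_Factorial" "HOL-Computational_Algebra.Field_as_Ring"
begin

text \<open>Polynomials in C[x,y] are represented as elements of C[x][y], i.e. the type
  complex poly poly: the outer variable is y, the inner variable is x.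
  The monomial x^i y^j has coefficient  coeff (coeff P j) i.\<close>

type_synonym bipoly = "complex poly poly"

definition ev2 :: "bipoly \<Rightarrow> complex \<Rightarrow> complex \<Rightarrow> complex" where
  "ev2 P x y = poly (map_poly (\<lambda>c. poly c x) P) y"

definition homog :: "nat \<Rightarrow> bipoly \<Rightarrow> bool" where
  "homog d P \<longleftrightarrow> (\<forall>i j. coeff (coeff P j) i \<noteq> 0 \<longrightarrow> i + j = d)"

definition endo :: "bipoly \<Rightarrow> bipoly \<Rightarrow> complex^2 \<Rightarrow> complex^2" where
  "endo f1 f2 v = vector [ev2 f1 (v$1) (v$2), ev2 f2 (v$1) (v$2)]"

definition fixed_by :: "(complex^2^2) set \<Rightarrow> (complex^2 \<Rightarrow> complex^2) \<Rightarrow> bool" where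
  "fixed_by G F \<longleftrightarrow> (\<forall>g\<in>G. \<forall>v. g *v F (matrix_inv g *v v) = F v)"

text \<open>Model of P^1: complex option, with [x:y] \<mapsto> Some (x/y) if y \<noteq> 0, and [x:0] \<mapsto> None
  (the point at infinity [1:0]).\<close>
definition proj :: "complex^2 \<Rightarrow> complex option" where
  "proj v = (if v$2 = 0 then None else Some (v$1 / v$2))"

definition rep :: "complex option \<Rightarrow> complex^2" where
  "rep q = (case q of None \<Rightarrow> vector [1, 0] | Some z \<Rightarrow> vector [z, 1])"

definition pgl_class :: "complex^2^2 \<Rightarrow> (complex^2^2) set" where
  "pgl_class A = {B. \<exists>c. c \<noteq> 0 \<and> B = (\<chi> i j. c * A$i$j)}"

definition PGL2 :: "(complex^2^2) set set" where
  "PGL2 = pgl_class ` {A. invertible A}"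

definition pgl_mul :: "(complex^2^2) set \<Rightarrow> (complex^2^2) set \<Rightarrow> (complex^2^2) set" where
  "pgl_mul X Y = pgl_class ((SOME A. A \<in> X) ** (SOME B. B \<in> Y))"

definition pgl_inv :: "(complex^2^2) set \<Rightarrow> (complex^2^2) set" where
  "pgl_inv X = pgl_class (matrix_inv (SOME A. A \<in> X))"

definition pgl_subgroup :: "(complex^2^2) set set \<Rightarrow> bool" where
  "pgl_subgroup H \<longleftrightarrow> H \<subseteq> PGL2 \<and> pgl_class (mat 1) \<in> H \<and>
     (\<forall>X\<in>H. \<forall>Y\<in>H. pgl_mul X Y \<in> H) \<and> (\<forall>X\<in>H. pgl_inv X \<in> H)"

definition pgl_act :: "(complex^2^2) set \<Rightarrow> complex option \<Rightarrow> complex option" where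
  "pgl_act X q = proj ((SOME A. A \<in> X) *v rep q)"

definition sl_preimage :: "(complex^2^2) set set \<Rightarrow> (complex^2^2) set" where
  "sl_preimage H = {A. det A = 1 \<and> pgl_class A \<in> H}"

definition zero_locus :: "bipoly \<Rightarrow> bipoly \<Rightarrow> complex option set" where
  "zero_locus f1 f2 = {proj v | v. v \<noteq> 0 \<and>
       ev2 f1 (v$1) (v$2) * v$2 - ev2 f2 (v$1) (v$2) * v$1 = 0}"

definition admissible :: "(complex^2^2) set set \<Rightarrow> complex option set \<Rightarrow> bipoly \<Rightarrow> bipoly \<Rightarrow> bool" where
  "admissible H \<Lambda> f1 f2 \<longleftrightarrow> (\<exists>d. homog d f1 \<and> homog d f2) \<and>
     fixed_by (sl_preimage H) (endo f1 f2) \<and> \<Lambda> = zero_locus f1 f2"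

definition delta :: "bipoly \<Rightarrow> bipoly \<Rightarrow> complex option \<Rightarrow> complex option" where
  "delta f1 f2 q = proj (endo (f1 div gcd f1 f2) (f2 div gcd f1 f2) (rep q))"

definition pgl_equivariant :: "(complex^2^2) set set \<Rightarrow> (complex option \<Rightarrow> complex option) \<Rightarrow> bool" where
  "pgl_equivariant H \<phi> \<longleftrightarrow> (\<forall>X\<in>H. \<forall>q. \<phi> (pgl_act X q) = pgl_act X (\<phi> q))"

end

theory Submission
  imports Defs "HOL-Computational_Algebra.Fundamental_Theorem_Algebra"
begin

text \<open>For a point \<open>\<mu>\<close> of the projective line let \<open>l\<^sub>\<mu>\<close> be a linear form vanishing exactly at
  \<open>\<mu>\<close>, and put \<open>P = \<Prod>\<^sub>\<mu> l\<^sub>\<mu>\<close> and \<open>F(w) = \<Sum>\<^sub>\<nu> (\<Prod>\<^sub>\<mu>\<^sub>\<noteq>\<^sub>\<nu> l\<^sub>\<mu>(w)) \<nu>\<close>, with \<open>\<mu>, \<nu>\<close> ranging over \<open>\<Lambda>\<close>.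
  Then \<open>det(w, F w) = |\<Lambda>| P(w)\<close>, so the zero locus of \<open>F\<close> is \<open>\<Lambda>\<close>, and \<open>F(\<nu>)\<close> is a nonzero
  multiple of \<open>\<nu>\<close>, so every point of \<open>\<Lambda>\<close> is fixed by the induced map. As \<open>G\<close> permutes \<open>\<Lambda>\<close>,
  \<open>P \<circ> g = \<chi>(g) P\<close> and \<open>F \<circ> g = \<chi>(g) g \<circ> F\<close> for a character \<open>\<chi>\<close> of the finite group \<open>G\<close>;
  if \<open>\<chi>\<^sup>m\<^sup>+\<^sup>1 = 1\<close> then \<open>P\<^sup>m F\<close> is fixed by \<open>G\<close>.

  Equivariance of \<open>\<delta>\<close> for an arbitrary fixed pair survives cancelling the common factor of
  \<open>f\<^sub>1, f\<^sub>2\<close>, because that factor stays a nonzero polynomial after a linear substitution. Since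
  \<open>\<delta>\<close> always has a fixed point and fixed points lie in the zero locus, equivariance then makes
  a single orbit fixed pointwise.\<close>

section \<open>Bivariate polynomials\<close>

lemma ev2_poly_eval: "ev2 P x (poly c x) = poly (poly P c) x"
  unfolding ev2_def by (induction P) (simp_all add: map_poly_pCons)

lemma ev2_altdef: "ev2 P x y = poly (poly P [:y:]) x"
  using ev2_poly_eval[of P x "[:y:]"] by simp

lemma ev2_add [simp]: "ev2 (A + B) x y = ev2 A x y + ev2 B x y"
  and ev2_diff [simp]: "ev2 (A - B) x y = ev2 A x y - ev2 B x y"
  and ev2_mult [simp]: "ev2 (A * B) x y = ev2 A x y * ev2 B x y"
  and ev2_power [simp]: "ev2 (A ^ n) x y = ev2 A x y ^ n"
  and ev2_sum [simp]: "ev2 (\<Sum>k\<in>S. C k) x y = (\<Sum>k\<in>S. ev2 (C k) x y)"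
  and ev2_prod [simp]: "ev2 (\<Prod>k\<in>S. C k) x y = (\<Prod>k\<in>S. ev2 (C k) x y)"
  and ev2_smult [simp]: "ev2 (smult a P) x y = poly a x * ev2 P x y"
  and ev2_const [simp]: "ev2 [:[:c:]:] x y = c"
  and ev2_0 [simp]: "ev2 0 x y = 0"
  and ev2_1 [simp]: "ev2 1 x y = 1"
  by (simp_all add: ev2_altdef poly_sum poly_prod)

definition linear_form :: "complex \<Rightarrow> complex \<Rightarrow> bipoly" where
  "linear_form a b = [:[:0, a:], [:b:]:]"

lemma ev2_linear_form [simp]: "ev2 (linear_form a b) x y = a * x + b * y"
  by (simp add: ev2_altdef linear_form_def algebra_simps)

lemma poly_altdef_le:
  fixes p :: "'a::comm_semiring_1 poly"
  assumes "degree p \<le> n"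
  shows "poly p x = (\<Sum>i\<le>n. coeff p i * x ^ i)"
proof -
  have "poly p x = (\<Sum>i\<le>degree p. coeff p i * x ^ i)" by (rule poly_altdef)
  also have "\<dots> = (\<Sum>i\<le>n. coeff p i * x ^ i)"
    by (rule sum.mono_neutral_left) (use assms in \<open>auto simp: coeff_eq_0\<close>)
  finally show ?thesis .
qed

definition coeff_bound :: "bipoly \<Rightarrow> nat" where
  "coeff_bound P = degree P + (\<Sum>j\<le>degree P. degree (coeff P j))"

lemma coeff_bound_ge: "coeff (coeff P j) i \<noteq> 0 \<Longrightarrow> i \<le> coeff_bound P \<and> j \<le> coeff_bound P"
proof -
  assume nz: "coeff (coeff P j) i \<noteq> 0"
  hence j: "j \<le> degree P" by (metis coeff_0 le_degree)
  have "i \<le> degree (coeff P j)" using nz le_degree by blast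
  also have "degree (coeff P j) \<le> (\<Sum>j\<le>degree P. degree (coeff P j))"
    by (rule member_le_sum) (use j in auto)
  finally show ?thesis using j unfolding coeff_bound_def by linarith
qed

lemma ev2_as_sum:
  assumes "\<And>i j. coeff (coeff P j) i \<noteq> 0 \<Longrightarrow> i \<le> N \<and> j \<le> N"
  shows "ev2 P x y = (\<Sum>j\<le>N. \<Sum>i\<le>N. coeff (coeff P j) i * x ^ i * y ^ j)"
proof -
  have deg_coeff: "degree (coeff P j) \<le> N" for j
  proof (rule ccontr)
    assume "\<not> degree (coeff P j) \<le> N"
    hence "coeff (coeff P j) (degree (coeff P j)) \<noteq> 0" by auto
    with assms \<open>\<not> degree (coeff P j) \<le> N\<close> show False by blast
  qed
  have "degree P \<le> N"
  proof (rule ccontr)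
    assume "\<not> degree P \<le> N"
    hence "coeff P (degree P) \<noteq> 0" by auto
    then obtain i where "coeff (coeff P (degree P)) i \<noteq> 0" by (metis coeff_0 poly_eqI)
    with assms \<open>\<not> degree P \<le> N\<close> show False by blast
  qed
  hence "ev2 P x y = (\<Sum>j\<le>N. coeff (map_poly (\<lambda>c. poly c x) P) j * y ^ j)"
    unfolding ev2_def by (intro poly_altdef_le) (meson map_poly_degree_leq order_trans)
  also have "\<dots> = (\<Sum>j\<le>N. (\<Sum>i\<le>N. coeff (coeff P j) i * x ^ i) * y ^ j)"
    by (rule sum.cong) (auto simp: coeff_map_poly poly_altdef_le[OF deg_coeff])
  finally show ?thesis by (simp add: sum_distrib_right)
qed

lemma bipoly_eqI: "(\<And>i j. coeff (coeff P j) i = coeff (coeff Q j) i) \<Longrightarrow> P = Q"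
  by (simp add: poly_eq_iff)

lemma bipoly_eq_0_if_ev2_eq_0:
  assumes "\<And>x y. ev2 P x y = 0"
  shows "P = 0"
proof -
  have "map_poly (\<lambda>c. poly c x) P = 0" for x
    using assms unfolding ev2_def by (simp flip: poly_all_0_iff_0)
  hence "poly (coeff P j) x = 0" for x j
    by (metis coeff_0 coeff_map_poly poly_0)
  hence "coeff P j = 0" for j
    using poly_all_0_iff_0 by blast
  thus ?thesis by (simp add: poly_eqI)
qed

section \<open>Homogeneous polynomials\<close>

lemma homog_ev2_scale:
  assumes "homog d P"
  shows "ev2 P (c * x) (c * y) = c ^ d * ev2 P x y"
proof -
  let ?N = "coeff_bound P"
  have "ev2 P (c * x) (c * y) = (\<Sum>j\<le>?N. \<Sum>i\<le>?N. coeff (coeff P j) i * (c*x) ^ i * (c*y) ^ j)"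
    by (rule ev2_as_sum) (rule coeff_bound_ge)
  also have "\<dots> = (\<Sum>j\<le>?N. \<Sum>i\<le>?N. c ^ d * (coeff (coeff P j) i * x ^ i * y ^ j))"
  proof (intro sum.cong refl)
    fix j i
    show "coeff (coeff P j) i * (c*x) ^ i * (c*y) ^ j = c ^ d * (coeff (coeff P j) i * x ^ i * y ^ j)"
    proof (cases "coeff (coeff P j) i = 0")
      case False
      hence "i + j = d" using assms unfolding homog_def by blast
      thus ?thesis by (auto simp: power_mult_distrib power_add)
    qed simp
  qed
  also have "\<dots> = c ^ d * ev2 P x y"
    by (simp add: sum_distrib_left ev2_as_sum[OF coeff_bound_ge])
  finally show ?thesis .
qed

lemma homog_0 [simp]: "homog d 0"
  by (simp add: homog_def)

lemma homog_const: "homog 0 [:[:c:]:]"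
  by (auto simp: homog_def coeff_pCons split: nat.splits)

lemma homog_1: "homog 0 1"
  using homog_const[of 1] by (simp add: one_pCons)

lemma homog_linear_form: "homog 1 (linear_form a b)"
  by (auto simp: homog_def linear_form_def coeff_pCons split: nat.splits)

lemma homog_add: "homog d A \<Longrightarrow> homog d B \<Longrightarrow> homog d (A + B)"
  unfolding homog_def by (metis add.right_neutral add_0 coeff_add)

lemma homog_minus: "homog d A \<Longrightarrow> homog d (- A)"
  by (auto simp: homog_def)

lemma homog_diff: "homog d A \<Longrightarrow> homog d B \<Longrightarrow> homog d (A - B)"
  using homog_add[of d A "- B"] homog_minus[of d B] by simp

lemma homog_sum: "(\<And>k. k \<in> S \<Longrightarrow> homog d (A k)) \<Longrightarrow> homog d (\<Sum>k\<in>S. A k)"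
  by (induction S rule: infinite_finite_induct) (auto intro: homog_add)

lemma homog_mult:
  assumes "homog a A" "homog b B"
  shows "homog (a + b) (A * B)"
  unfolding homog_def
proof (intro allI impI)
  fix i j
  assume "coeff (coeff (A * B) j) i \<noteq> 0"
  hence "(\<Sum>l\<le>j. \<Sum>m\<le>i. coeff (coeff A l) m * coeff (coeff B (j - l)) (i - m)) \<noteq> 0"
    by (simp add: coeff_mult coeff_sum)
  then obtain l m where "l \<le> j" "m \<le> i"
    and "coeff (coeff A l) m * coeff (coeff B (j - l)) (i - m) \<noteq> 0"
    by (meson atMost_iff sum.neutral)
  moreover from this have "m + l = a" "(i - m) + (j - l) = b"
    using assms unfolding homog_def by auto
  ultimately show "i + j = a + b" by linarith
qed

lemma homog_prod:
  "finite S \<Longrightarrow> (\<And>k. k \<in> S \<Longrightarrow> homog (e k) (A k)) \<Longrightarrow> homog (\<Sum>k\<in>S. e k) (\<Prod>k\<in>S. A k)"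
  by (induction S rule: finite_induct) (simp_all add: homog_1 homog_mult)

lemma homog_power: "homog d A \<Longrightarrow> homog (n * d) (A ^ n)"
  by (induction n) (auto simp: homog_1 dest: homog_mult)

lemma homog_unique:
  assumes "P \<noteq> 0" "homog d P" "homog e P"
  shows "d = e"
proof -
  obtain j where "coeff P j \<noteq> 0" using assms(1) poly_eq_iff[of P 0] by auto
  then obtain i where "coeff (coeff P j) i \<noteq> 0" using poly_eq_iff[of "coeff P j" 0] by auto
  thus "d = e" using assms(2,3) unfolding homog_def by metis
qed

definition hcomp :: "nat \<Rightarrow> bipoly \<Rightarrow> bipoly" where
  "hcomp k P = (\<Sum>j\<le>k. monom (monom (coeff (coeff P j) (k - j)) (k - j)) j)"

lemma coeff_hcomp:
  "coeff (coeff (hcomp k P) j) i = (if i + j = k then coeff (coeff P j) i else 0)"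
proof -
  have "coeff (coeff (hcomp k P) j) i =
     (\<Sum>j'\<le>k. if j' = j then coeff (monom (coeff (coeff P j') (k - j')) (k - j')) i else 0)"
    unfolding hcomp_def by (simp add: coeff_sum coeff_monom)
  also have "\<dots> = (if j \<le> k then coeff (monom (coeff (coeff P j) (k - j)) (k - j)) i else 0)"
    by (simp add: sum.delta')
  finally show ?thesis by (auto simp: coeff_monom)
qed

lemma homog_hcomp: "homog k (hcomp k P)"
  by (auto simp: homog_def coeff_hcomp)

lemma hcomp_0 [simp]: "hcomp k 0 = 0"
  by (rule bipoly_eqI) (simp add: coeff_hcomp)

lemma hcomp_add: "hcomp k (A + B) = hcomp k A + hcomp k B"
  by (rule bipoly_eqI) (simp add: coeff_hcomp)

lemma hcomp_sum: "hcomp k (\<Sum>l\<in>S. A l) = (\<Sum>l\<in>S. hcomp k (A l))"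
  by (induction S rule: infinite_finite_induct) (simp_all add: hcomp_add)

lemma hcomp_homog: "homog m Q \<Longrightarrow> hcomp k Q = (if k = m then Q else 0)"
  by (rule bipoly_eqI) (auto simp: coeff_hcomp homog_def)

lemma homog_iff_hcomp: "homog d P \<longleftrightarrow> (\<forall>k. k \<noteq> d \<longrightarrow> hcomp k P = 0)"
proof
  assume "\<forall>k. k \<noteq> d \<longrightarrow> hcomp k P = 0"
  thus "homog d P"
    unfolding homog_def by (metis coeff_0 coeff_hcomp)
qed (simp add: hcomp_homog)

definition hdegrees :: "bipoly \<Rightarrow> nat set" where
  "hdegrees P = {k. hcomp k P \<noteq> 0}"

lemma hdegrees_le:
  assumes "k \<in> hdegrees P"
  shows "k \<le> 2 * coeff_bound P"
proof (rule ccontr)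
  assume "\<not> k \<le> 2 * coeff_bound P"
  hence "hcomp k P = 0"
    using coeff_bound_ge[of P] by (intro bipoly_eqI) (fastforce simp: coeff_hcomp)
  thus False using assms by (simp add: hdegrees_def)
qed

lemma finite_hdegrees: "finite (hdegrees P)"
  using hdegrees_le by (meson finite_atMost finite_subset atMost_iff subsetI)

lemma sum_hcomp: "P = (\<Sum>k\<in>hdegrees P. hcomp k P)"
proof -
  have "P = (\<Sum>k\<le>2 * coeff_bound P. hcomp k P)"
  proof (rule bipoly_eqI)
    fix i j
    have "coeff (coeff (\<Sum>k\<le>2 * coeff_bound P. hcomp k P) j) i =
        (if i + j \<le> 2 * coeff_bound P then coeff (coeff P j) i else 0)"
      by (simp add: coeff_sum coeff_hcomp sum.delta eq_commute)
    moreover have "coeff (coeff P j) i \<noteq> 0 \<Longrightarrow> i + j \<le> 2 * coeff_bound P"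
      using coeff_bound_ge[of P j i] by linarith
    ultimately show "coeff (coeff P j) i = coeff (coeff (\<Sum>k\<le>2 * coeff_bound P. hcomp k P) j) i"
      by auto
  qed
  also have "\<dots> = (\<Sum>k\<in>hdegrees P. hcomp k P)"
    by (rule sum.mono_neutral_right) (auto simp: hdegrees_def intro: hdegrees_le)
  finally show ?thesis .
qed

lemma hdegrees_nonempty: "P \<noteq> 0 \<Longrightarrow> hdegrees P \<noteq> {}"
  using sum_hcomp[of P] by auto

lemma hcomp_mult:
  "hcomp n (A * B) =
     (\<Sum>k\<in>hdegrees A. \<Sum>l\<in>hdegrees B. if n = k + l then hcomp k A * hcomp l B else 0)"
proof -
  have "A * B = (\<Sum>k\<in>hdegrees A. hcomp k A) * (\<Sum>l\<in>hdegrees B. hcomp l B)"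
    using sum_hcomp[of A] sum_hcomp[of B] by simp
  also have "\<dots> = (\<Sum>k\<in>hdegrees A. \<Sum>l\<in>hdegrees B. hcomp k A * hcomp l B)"
    by (simp add: sum_product)
  finally have "hcomp n (A * B) =
      (\<Sum>k\<in>hdegrees A. \<Sum>l\<in>hdegrees B. hcomp n (hcomp k A * hcomp l B))"
    by (simp add: hcomp_sum)
  also have "\<dots> = (\<Sum>k\<in>hdegrees A. \<Sum>l\<in>hdegrees B. if n = k + l then hcomp k A * hcomp l B else 0)"
    by (intro sum.cong refl) (simp add: hcomp_homog[OF homog_mult[OF homog_hcomp homog_hcomp]])
  finally show ?thesis .
qed

lemma sum_sum_if_unique_split:
  fixes K L :: "nat set"
  assumes "finite K" "finite L" "k0 \<in> K" "l0 \<in> L"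
    and "\<And>k l. k \<in> K \<Longrightarrow> l \<in> L \<Longrightarrow> k + l = k0 + l0 \<Longrightarrow> k = k0 \<and> l = l0"
  shows "(\<Sum>k\<in>K. \<Sum>l\<in>L. if k0 + l0 = k + l then f k l else (0::'a::comm_monoid_add)) = f k0 l0"
proof -
  have "(\<Sum>k\<in>K. \<Sum>l\<in>L. if k0 + l0 = k + l then f k l else 0) =
        (\<Sum>k\<in>K. \<Sum>l\<in>L. if k = k0 then (if l = l0 then f k l else 0) else 0)"
  proof (intro sum.cong refl)
    fix k l assume "k \<in> K" "l \<in> L"
    hence "(k0 + l0 = k + l) = (k = k0 \<and> l = l0)" using assms(5)[of k l] by auto
    thus "(if k0 + l0 = k + l then f k l else 0) = (if k = k0 then (if l = l0 then f k l else 0) else 0)"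
      by auto
  qed
  also have "\<dots> = (\<Sum>k\<in>K. if k = k0 then f k0 l0 else 0)"
    by (intro sum.cong refl) (use assms(2,4) in \<open>auto simp: sum.delta\<close>)
  also have "\<dots> = f k0 l0"
    using assms(1,3) by (simp add: sum.delta)
  finally show ?thesis .
qed

text \<open>The product of the top (resp. bottom) homogeneous components of two factors is the top
  (resp. bottom) component of the product, so both extremal degrees of a factor of a
  homogeneous polynomial agree.\<close>

lemma homog_factors:
  assumes "A * B = P" "P \<noteq> 0" "homog d P"
  shows "\<exists>a b. homog a A \<and> homog b B \<and> a + b = d"
proof -
  have fin: "finite (hdegrees A)" "finite (hdegrees B)" by (rule finite_hdegrees)+
  have ne: "hdegrees A \<noteq> {}" "hdegrees B \<noteq> {}"
    using hdegrees_nonempty assms(1,2) by auto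
  define ah where "ah = Max (hdegrees A)"
  define al where "al = Min (hdegrees A)"
  define bh where "bh = Max (hdegrees B)"
  define bl where "bl = Min (hdegrees B)"
  have mem: "ah \<in> hdegrees A" "al \<in> hdegrees A" "bh \<in> hdegrees B" "bl \<in> hdegrees B"
    and bnd: "\<forall>k\<in>hdegrees A. al \<le> k \<and> k \<le> ah" "\<forall>l\<in>hdegrees B. bl \<le> l \<and> l \<le> bh"
    using fin ne by (auto simp: ah_def al_def bh_def bl_def)
  have extremal: "k + l = d"
    if "k \<in> hdegrees A" "l \<in> hdegrees B"
      and unique: "\<And>k' l'. k' \<in> hdegrees A \<Longrightarrow> l' \<in> hdegrees B \<Longrightarrow> k' + l' = k + l \<Longrightarrow> k' = k \<and> l' = l"
    for k l
  proof -
    have "hcomp (k + l) P = hcomp k A * hcomp l B"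
      unfolding assms(1)[symmetric] hcomp_mult
      by (rule sum_sum_if_unique_split[OF fin that(1,2) unique])
    also have "\<dots> \<noteq> 0" using that(1,2) by (simp add: hdegrees_def)
    finally show ?thesis using assms(3) homog_iff_hcomp by blast
  qed
  have top: "k = ah \<and> l = bh"
    if "k \<in> hdegrees A" "l \<in> hdegrees B" "k + l = ah + bh" for k l
  proof -
    have "k \<le> ah" "l \<le> bh" using bnd that(1,2) by auto
    thus ?thesis using that(3) by linarith
  qed
  have bottom: "k = al \<and> l = bl"
    if "k \<in> hdegrees A" "l \<in> hdegrees B" "k + l = al + bl" for k l
  proof -
    have "al \<le> k" "bl \<le> l" using bnd that(1,2) by auto
    thus ?thesis using that(3) by linarith
  qed
  have "ah + bh = d" by (rule extremal[OF mem(1,3) top])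
  moreover have "al + bl = d" by (rule extremal[OF mem(2,4) bottom])
  moreover have "al \<le> ah" "bl \<le> bh" using bnd mem by auto
  ultimately have "al = ah" "bl = bh" by linarith+
  hence "hdegrees A = {ah}" "hdegrees B = {bh}"
    using mem bnd by (auto simp: set_eq_iff)
  hence "A = hcomp ah A" "B = hcomp bh B" using sum_hcomp[of A] sum_hcomp[of B] by simp_all
  thus ?thesis using homog_hcomp \<open>ah + bh = d\<close> by metis
qed

lemma homog_div:
  assumes "homog d f" "homog e h" "h \<noteq> 0" "h dvd f"
  shows "homog (d - e) (f div h)"
proof (cases "f = 0")
  case False
  have "h * (f div h) = f" using assms(4) by simp
  then obtain a b where "homog a h" "homog b (f div h)" "a + b = d"
    using homog_factors[OF _ False assms(1)] by blast
  moreover have "a = e" using homog_unique[OF assms(3)] \<open>homog a h\<close> assms(2) by blast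
  ultimately show ?thesis by (metis add_diff_cancel_left')
qed simp

lemma homog_dvd_homog:
  assumes "homog d f" "f \<noteq> 0" "h dvd f"
  shows "\<exists>e. homog e h"
  using homog_factors[of h "f div h" f d] assms by auto

definition point_factor :: "complex \<Rightarrow> complex \<Rightarrow> bipoly" where
  "point_factor a b = (if a = 0 then [:[:0, 1:]:] else [:[:0, -(b/a):], 1:])"

lemma point_factor_not_unit: "\<not> is_unit (point_factor a b)"
proof
  assume u: "is_unit (point_factor a b)"
  show False
  proof (cases "a = 0")
    case True
    hence "is_unit [:0, 1::complex:]" using u by (simp add: point_factor_def is_unit_const_poly_iff)
    thus False by (simp add: is_unit_iff_degree)
  next
    case False
    then obtain c where "point_factor a b = [:c:]" using u is_unit_poly_iff by blast
    thus False using False by (simp add: point_factor_def)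
  qed
qed

lemma point_factor_dvd_homog:
  assumes "homog d P" "ev2 P a b = 0" "a \<noteq> 0 \<or> b \<noteq> 0"
  shows "point_factor a b dvd P"
proof (cases "a = 0")
  case False
  define c where "c = [:0, b / a:]"
  have "ev2 P a b = a ^ d * ev2 P 1 (b / a)"
    using homog_ev2_scale[OF assms(1), of a 1 "b/a"] False by simp
  hence root: "ev2 P 1 (b / a) = 0" using assms(2) False by simp
  have "poly (poly P c) x = 0" for x
  proof -
    have "poly (poly P c) x = ev2 P (x * 1) (x * (b / a))"
      by (simp add: ev2_poly_eval[symmetric] c_def mult.commute)
    also have "\<dots> = x ^ d * ev2 P 1 (b / a)" by (rule homog_ev2_scale[OF assms(1)])
    finally show ?thesis using root by simp
  qed
  hence "poly P c = 0" using poly_all_0_iff_0 by blast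
  hence "P = [:-c, 1:] * synthetic_div P c" using synthetic_div_correct'[of c P] by simp
  moreover have "[:-c, 1:] = point_factor a b" using False by (simp add: point_factor_def c_def)
  ultimately show ?thesis by (metis dvd_triv_left)
next
  case True
  hence b: "b \<noteq> 0" using assms(3) by simp
  have other: "coeff (coeff P j) 0 = 0" if "j \<noteq> d" for j
    using assms(1) that unfolding homog_def by fastforce
  have "map_poly (\<lambda>c. poly c 0) P = monom (coeff (coeff P d) 0) d"
    by (rule poly_eqI) (auto simp: coeff_map_poly poly_0_coeff_0 coeff_monom other)
  hence "ev2 P 0 b = coeff (coeff P d) 0 * b ^ d" unfolding ev2_def by (simp add: poly_monom)
  hence "coeff (coeff P d) 0 = 0" using assms(2) True b by simp
  hence "coeff (coeff P j) 0 = 0" for j using other by (cases "j = d") auto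
  hence "[:0, 1:] dvd coeff P j" for j
    using dvd_iff_poly_eq_0[of 0 "coeff P j"] by (simp add: poly_0_coeff_0)
  hence "[:[:0, 1:]:] dvd P" by (simp add: const_poly_dvd_iff)
  thus ?thesis using True by (simp add: point_factor_def)
qed

lemma complex_poly_eq_0_if_roots_off_0:
  fixes r :: "complex poly"
  assumes "\<And>y. y \<noteq> 0 \<Longrightarrow> poly r y = 0"
  shows "r = 0"
proof -
  have "infinite (UNIV - {0 :: complex})" by (simp add: infinite_UNIV_char_0)
  moreover have "UNIV - {0} \<subseteq> {y. poly r y = 0}" using assms by auto
  ultimately show ?thesis using poly_roots_finite finite_subset by blast
qed

text \<open>If \<open>Q(z, 1)\<close> has no root it is constant by the fundamental theorem of algebra, and then
  \<open>Q(1, y) = y\<^sup>n Q(1/y, 1) = c y\<^sup>n\<close> forces \<open>Q(1, 0) = 0\<close>.\<close>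

lemma homog_has_zero:
  assumes "homog n Q" "n \<ge> 1"
  shows "\<exists>a b. (a \<noteq> 0 \<or> b \<noteq> 0) \<and> ev2 Q a b = 0"
proof (cases "\<exists>z. ev2 Q z 1 = 0")
  case False
  define p where "p = poly Q [:1:]"
  have p: "poly p z = ev2 Q z 1" for z by (simp add: p_def ev2_altdef)
  hence "constant (poly p)" using fundamental_theorem_of_algebra[of p] False by auto
  hence c: "ev2 Q z 1 = ev2 Q 0 1" for z using p unfolding constant_def by metis
  define r where "r = map_poly (\<lambda>a. poly a 1) Q - monom (ev2 Q 0 1) n"
  have "poly r y = 0" if "y \<noteq> 0" for y
  proof -
    have "ev2 Q 1 y = ev2 Q (y * (1/y)) (y * 1)" using that by simp
    also have "\<dots> = y ^ n * ev2 Q (1/y) 1" by (rule homog_ev2_scale[OF assms(1)])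
    also have "\<dots> = y ^ n * ev2 Q 0 1" by (simp only: c[of "1/y"])
    finally show ?thesis by (simp add: r_def ev2_def poly_monom)
  qed
  hence "r = 0" by (rule complex_poly_eq_0_if_roots_off_0)
  hence "ev2 Q 1 0 = ev2 Q 0 1 * 0 ^ n"
    using arg_cong[of r 0 "\<lambda>r. poly r 0"] by (simp add: r_def ev2_def poly_monom)
  also have "\<dots> = 0" using assms(2) by simp
  finally show ?thesis by (intro exI[of _ 1] exI[of _ 0]) simp
next
  case True
  then obtain z where "ev2 Q z 1 = 0" by blast
  thus ?thesis by (intro exI[of _ z] exI[of _ 1]) simp
qed

section \<open>Vectors, the projective line and \<open>PGL(2)\<close>\<close>

type_synonym vec2 = "complex^2"
type_synonym mat2 = "complex^2^2"

definition ev_vec :: "bipoly \<Rightarrow> vec2 \<Rightarrow> complex" where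
  "ev_vec P v = ev2 P (v$1) (v$2)"

lemma ev_vec_add [simp]: "ev_vec (A + B) v = ev_vec A v + ev_vec B v"
  and ev_vec_mult [simp]: "ev_vec (A * B) v = ev_vec A v * ev_vec B v"
  and ev_vec_diff [simp]: "ev_vec (A - B) v = ev_vec A v - ev_vec B v"
  and ev_vec_power [simp]: "ev_vec (A ^ n) v = ev_vec A v ^ n"
  and ev_vec_sum [simp]: "ev_vec (\<Sum>k\<in>S. C k) v = (\<Sum>k\<in>S. ev_vec (C k) v)"
  and ev_vec_prod [simp]: "ev_vec (\<Prod>k\<in>S. C k) v = (\<Prod>k\<in>S. ev_vec (C k) v)"
  and ev_vec_smult [simp]: "ev_vec (smult a P) v = poly a (v$1) * ev_vec P v"
  and ev_vec_const [simp]: "ev_vec [:[:c:]:] v = c"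
  and ev_vec_1 [simp]: "ev_vec 1 v = 1"
  by (simp_all add: ev_vec_def)

lemma bipoly_eq_0_if_ev_vec_eq_0: "(\<And>v. ev_vec P v = 0) \<Longrightarrow> P = 0"
  by (rule bipoly_eq_0_if_ev2_eq_0) (metis ev_vec_def vector_2)

definition det2 :: "vec2 \<Rightarrow> vec2 \<Rightarrow> complex" where
  "det2 u w = u$1 * w$2 - u$2 * w$1"

lemma vec2_eq_iff: "(v::vec2) = w \<longleftrightarrow> v$1 = w$1 \<and> v$2 = w$2"
  by (simp add: vec_eq_iff forall_2)

lemma vec2_nonzero_iff: "(v::vec2) \<noteq> 0 \<longleftrightarrow> v$1 \<noteq> 0 \<or> v$2 \<noteq> 0"
  by (simp add: vec2_eq_iff)

lemma matrix_vector_mult_nth: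
  "((A::mat2) *v v)$1 = A$1$1 * v$1 + A$1$2 * v$2"
  "((A::mat2) *v v)$2 = A$2$1 * v$1 + A$2$2 * v$2"
  by (simp_all add: matrix_vector_mult_def sum_2)

lemma ev_vec_homog_scale: "homog d P \<Longrightarrow> ev_vec P (c *s v) = c ^ d * ev_vec P v"
  by (simp add: ev_vec_def homog_ev2_scale)

lemma endo_nth [simp]: "endo f1 f2 v $ 1 = ev_vec f1 v" "endo f1 f2 v $ 2 = ev_vec f2 v"
  by (simp_all add: endo_def ev_vec_def)

lemma det2_matrix_vector_mult: "det2 ((A::mat2) *v u) (A *v w) = det A * det2 u w"
  by (simp add: det2_def matrix_vector_mult_nth det_2 algebra_simps)

lemma det2_smult: "det2 u (c *s w) = c * det2 u w" "det2 (c *s u) w = c * det2 u w"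
  by (simp_all add: det2_def algebra_simps)

lemma det2_swap: "det2 u w = - det2 w u"
  by (simp add: det2_def algebra_simps)

lemma det2_self [simp]: "det2 u u = 0"
  by (simp add: det2_def algebra_simps)

lemma invertible_mult_nonzero: "invertible (A::mat2) \<Longrightarrow> v \<noteq> 0 \<Longrightarrow> A *v v \<noteq> 0"
  by (metis inj_matrix_vector_mult injD matrix_vector_mult_0_right)

lemma matrix_inv_cancel:
  assumes "invertible (A::mat2)"
  shows "A *v (matrix_inv A *v v) = v" "matrix_inv A *v (A *v v) = v"
proof -
  have "A ** matrix_inv A = mat 1 \<and> matrix_inv A ** A = mat 1"
    using assms unfolding invertible_def matrix_inv_def by (rule someI_ex)
  thus "A *v (matrix_inv A *v v) = v" "matrix_inv A *v (A *v v) = v"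
    by (simp_all add: matrix_vector_mul_assoc)
qed

lemma rep_nth [simp]:
  "rep None $ 1 = 1" "rep None $ 2 = 0" "rep (Some z) $ 1 = z" "rep (Some z) $ 2 = 1"
  by (simp_all add: rep_def)

lemma rep_nonzero: "rep q \<noteq> 0"
  by (cases q) (simp_all add: vec2_nonzero_iff)

lemma proj_rep [simp]: "proj (rep q) = q"
  by (cases q) (simp_all add: proj_def)

lemma proj_smult: "c \<noteq> 0 \<Longrightarrow> proj (c *s v) = proj v"
  by (simp add: proj_def)

lemma proj_eq_iff_det2:
  assumes "u \<noteq> 0" "v \<noteq> 0"
  shows "proj u = proj v \<longleftrightarrow> det2 u v = 0"
  using assms unfolding vec2_nonzero_iff proj_def det2_def
  by (auto simp: field_simps split: if_splits)

lemma det2_rep_eq_0_iff: "w \<noteq> 0 \<Longrightarrow> det2 w (rep \<mu>) = 0 \<longleftrightarrow> proj w = \<mu>"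
  using proj_eq_iff_det2[of w "rep \<mu>"] rep_nonzero by simp

definition rep_factor :: "vec2 \<Rightarrow> complex" where
  "rep_factor v = (if v$2 = 0 then v$1 else v$2)"

lemma rep_factor_nonzero: "v \<noteq> 0 \<Longrightarrow> rep_factor v \<noteq> 0"
  by (auto simp: rep_factor_def vec2_nonzero_iff)

lemma rep_proj: "v \<noteq> 0 \<Longrightarrow> rep (proj v) = (1 / rep_factor v) *s v"
  by (auto simp: rep_factor_def proj_def rep_def vec2_eq_iff vec2_nonzero_iff)

definition smat :: "complex \<Rightarrow> mat2 \<Rightarrow> mat2" where
  "smat c A = (\<chi> i j. c * A$i$j)"

lemma smat_mult_vec: "smat c A *v v = c *s (A *v v)"
  by (simp add: vec2_eq_iff matrix_vector_mult_nth smat_def algebra_simps)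

lemma smat_smat: "smat c (smat d A) = smat (c * d) A"
  by (simp add: smat_def vec_eq_iff)

lemma det_smat: "det (smat c A) = c ^ 2 * det A"
  by (simp add: det_2 smat_def power2_eq_square algebra_simps)

lemma smat_mult_smat: "smat c A ** smat d B = smat (c * d) (A ** B)"
  by (simp add: smat_def vec_eq_iff matrix_matrix_mult_def sum_distrib_left algebra_simps)

lemma pgl_class_altdef: "pgl_class A = {B. \<exists>c. c \<noteq> 0 \<and> B = smat c A}"
  by (simp add: pgl_class_def smat_def)

lemma in_pgl_class: "A \<in> pgl_class A"
  unfolding pgl_class_altdef by (intro CollectI exI[of _ 1]) (simp add: smat_def vec_eq_iff)

lemma pgl_class_smat: "c \<noteq> 0 \<Longrightarrow> pgl_class (smat c A) = pgl_class A"
  unfolding pgl_class_altdef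
proof (auto simp: smat_smat)
  fix c' :: complex assume "c \<noteq> 0" "c' \<noteq> 0"
  thus "\<exists>c''. c'' \<noteq> 0 \<and> smat c' A = smat (c'' * c) A" by (intro exI[of _ "c' / c"]) simp
next
  fix c' :: complex assume "c \<noteq> 0" "c' \<noteq> 0"
  thus "\<exists>c''. c'' \<noteq> 0 \<and> smat (c' * c) A = smat c'' A" by (intro exI[of _ "c' * c"]) simp
qed

lemma some_in_pgl_class: "\<exists>c. c \<noteq> 0 \<and> (SOME B. B \<in> pgl_class A) = smat c A"
  using someI[of "\<lambda>B. B \<in> pgl_class A", OF in_pgl_class] unfolding pgl_class_altdef by blast

lemma pgl_act_class: "pgl_act (pgl_class A) q = proj (A *v rep q)"
  using some_in_pgl_class[of A] by (auto simp: pgl_act_def smat_mult_vec proj_smult)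

lemma pgl_mul_class: "pgl_mul (pgl_class A) (pgl_class B) = pgl_class (A ** B)"
  using some_in_pgl_class[of A] some_in_pgl_class[of B]
  by (auto simp: pgl_mul_def smat_mult_smat pgl_class_smat)

lemma PGL2_has_SL2_rep: "X \<in> PGL2 \<Longrightarrow> \<exists>g. det g = 1 \<and> pgl_class g = X"
proof -
  assume "X \<in> PGL2"
  then obtain M where M: "invertible M" "X = pgl_class M" unfolding PGL2_def by blast
  define s where "s = csqrt (det M)"
  have s: "s \<noteq> 0" "s ^ 2 = det M"
    using M(1) by (auto simp: s_def invertible_det_nz)
  have "det (smat (1/s) M) = 1" using s M(1) by (simp add: det_smat power_divide invertible_det_nz)
  moreover have "pgl_class (smat (1/s) M) = X" using s M by (simp add: pgl_class_smat)
  ultimately show ?thesis by blast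
qed

lemma pgl_act_inv:
  assumes "X \<in> PGL2"
  shows "pgl_act (pgl_inv X) (pgl_act X q) = q"
proof -
  obtain M where M: "invertible M" "X = pgl_class M" using assms unfolding PGL2_def by blast
  define A where "A = (SOME A. A \<in> X)"
  obtain c where "c \<noteq> 0" "A = smat c M" using some_in_pgl_class M(2) unfolding A_def by blast
  hence A: "invertible A" using M(1) by (simp add: invertible_det_nz det_smat)
  have act: "pgl_act X p = proj (A *v rep p)" for p by (simp add: pgl_act_def A_def)
  have inv: "pgl_inv X = pgl_class (matrix_inv A)" by (simp add: pgl_inv_def A_def)
  have nz: "A *v rep q \<noteq> 0" by (rule invertible_mult_nonzero[OF A rep_nonzero])
  show ?thesis
    unfolding inv pgl_act_class act rep_proj[OF nz]
    by (simp add: vector_scalar_commute matrix_inv_cancel[OF A] proj_smult rep_factor_nonzero[OF nz])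
qed

lemma infinite_P1: "infinite (UNIV :: complex option set)"
  by (simp add: infinite_UNIV_char_0)

section \<open>Fixed pairs and the induced map of the projective line\<close>

definition lin_subst :: "mat2 \<Rightarrow> bipoly \<Rightarrow> bipoly" where
  "lin_subst g P = (\<Sum>j\<le>coeff_bound P. \<Sum>i\<le>coeff_bound P. [:[:coeff (coeff P j) i:]:] *
      linear_form (g$1$1) (g$1$2) ^ i * linear_form (g$2$1) (g$2$2) ^ j)"

lemma ev_vec_lin_subst: "ev_vec (lin_subst g P) v = ev_vec P (g *v v)"
  unfolding ev_vec_def lin_subst_def matrix_vector_mult_nth
  by (simp add: ev2_as_sum[OF coeff_bound_ge, of P] mult.assoc)

lemma lin_subst_nonzero:
  assumes "invertible g" "P \<noteq> 0"
  shows "lin_subst g P \<noteq> 0"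
proof
  assume "lin_subst g P = 0"
  hence "ev_vec P (g *v (matrix_inv g *v u)) = 0" for u
    by (metis ev_vec_lin_subst ev_vec_def ev2_0)
  hence "P = 0" by (intro bipoly_eq_0_if_ev_vec_eq_0) (simp add: matrix_inv_cancel[OF assms(1)])
  thus False using assms(2) by simp
qed

lemma fixed_by_commute:
  "fixed_by G F \<Longrightarrow> g \<in> G \<Longrightarrow> invertible g \<Longrightarrow> F (g *v w) = g *v F w"
  unfolding fixed_by_def by (metis matrix_inv_cancel(2))

lemma endo_homog_smult:
  "homog d f1 \<Longrightarrow> homog d f2 \<Longrightarrow> endo f1 f2 (c *s v) = c ^ d *s endo f1 f2 v"
  by (simp add: vec2_eq_iff ev_vec_homog_scale)

lemma zero_locus_iff_det2:
  assumes "homog d f1" "homog d f2"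
  shows "q \<in> zero_locus f1 f2 \<longleftrightarrow> det2 (rep q) (endo f1 f2 (rep q)) = 0"
proof
  assume "q \<in> zero_locus f1 f2"
  then obtain v where v: "q = proj v" "v \<noteq> 0" "det2 v (endo f1 f2 v) = 0"
    unfolding zero_locus_def by (auto simp: det2_def ev_vec_def algebra_simps)
  thus "det2 (rep q) (endo f1 f2 (rep q)) = 0"
    by (simp add: rep_proj endo_homog_smult[OF assms] det2_smult)
next
  assume "det2 (rep q) (endo f1 f2 (rep q)) = 0"
  thus "q \<in> zero_locus f1 f2"
    unfolding zero_locus_def using rep_nonzero
    by (auto simp: det2_def ev_vec_def algebra_simps intro!: exI[of _ "rep q"])
qed

lemma ev_vec_unit_nonzero: "is_unit u \<Longrightarrow> ev_vec u w \<noteq> 0"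
  by (metis dvdE ev_vec_1 ev_vec_mult mult_zero_left zero_neq_one)

text \<open>\<open>\<delta>\<close> only depends on the pair up to a common factor: the normalised gcd absorbs \<open>c\<close> up to
  a unit, which is a nonzero constant.\<close>

lemma delta_mult_left:
  assumes "c \<noteq> 0"
  shows "delta (c * f1) (c * f2) = delta f1 f2"
proof -
  define u where "u = unit_factor c"
  have reduced: "(c * f) div gcd (c * f1) (c * f2) = u * (f div gcd f1 f2)"
    if "f = f1 \<or> f = f2" for f
  proof (cases "gcd f1 f2 = 0")
    case False
    have "gcd f1 f2 dvd f" using that by auto
    then obtain k where k: "f = gcd f1 f2 * k" by (rule dvdE)
    have "c * f = (unit_factor c * normalize c) * (gcd f1 f2 * k)" by (simp add: k)
    also have "\<dots> = (normalize c * gcd f1 f2) * (u * k)" by (simp add: u_def mult_ac)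
    finally have cf: "c * f = (normalize c * gcd f1 f2) * (u * k)" .
    have gcd: "gcd (c * f1) (c * f2) = normalize c * gcd f1 f2"
      by (simp add: gcd_mult_left normalize_mult)
    have "(c * f) div gcd (c * f1) (c * f2) = (normalize c * gcd f1 f2) * (u * k) div (normalize c * gcd f1 f2)"
      unfolding cf gcd ..
    also have "\<dots> = u * k" using False assms by (intro nonzero_mult_div_cancel_left) simp
    also have "\<dots> = u * (f div gcd f1 f2)" using False by (simp add: k)
    finally show ?thesis .
  qed (use that in auto)
  have "is_unit u" using assms by (simp add: u_def)
  hence "endo ((c * f1) div gcd (c * f1) (c * f2)) ((c * f2) div gcd (c * f1) (c * f2)) w =
      ev_vec u w *s endo (f1 div gcd f1 f2) (f2 div gcd f1 f2) w" for w
    by (simp add: reduced vec2_eq_iff)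
  with \<open>is_unit u\<close> show ?thesis
    by (simp add: delta_def fun_eq_iff proj_smult ev_vec_unit_nonzero)
qed

locale homog_pair =
  fixes f1 f2 :: bipoly and d :: nat
  assumes homog1: "homog d f1" and homog2: "homog d f2" and nonzero: "f1 \<noteq> 0 \<or> f2 \<noteq> 0"
begin

definition "h = gcd f1 f2"
definition "g1 = f1 div h"
definition "g2 = f2 div h"

lemma h_nonzero: "h \<noteq> 0"
  using nonzero by (simp add: h_def)

lemma endo_factor: "endo f1 f2 w = ev_vec h w *s endo g1 g2 w"
proof -
  have f: "f1 = h * g1" "f2 = h * g2" by (simp_all add: h_def g1_def g2_def)
  show ?thesis unfolding vec2_eq_iff endo_nth by (subst (1 2) f) simp
qed

lemma delta_eq: "delta f1 f2 q = proj (endo g1 g2 (rep q))"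
  by (simp add: delta_def g1_def g2_def h_def)

lemma homog_reduced: "\<exists>k. homog k g1 \<and> homog k g2"
proof -
  obtain f where "homog d f" "f \<noteq> 0" "h dvd f" using nonzero homog1 homog2 by (auto simp: h_def)
  then obtain e where e: "homog e h" using homog_dvd_homog by blast
  have "homog (d - e) g1" unfolding g1_def
    by (rule homog_div[OF homog1 e h_nonzero]) (simp add: h_def)
  moreover have "homog (d - e) g2" unfolding g2_def
    by (rule homog_div[OF homog2 e h_nonzero]) (simp add: h_def)
  ultimately show ?thesis by blast
qed

text \<open>A common zero of \<open>g\<^sub>1, g\<^sub>2\<close> would give a common linear factor, contradicting coprimality.\<close>

lemma reduced_nonzero:
  assumes "w \<noteq> 0"
  shows "endo g1 g2 w \<noteq> 0"
proof
  assume "endo g1 g2 w = 0"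
  hence zero: "ev2 g1 (w$1) (w$2) = 0" "ev2 g2 (w$1) (w$2) = 0"
    by (simp_all add: vec2_eq_iff ev_vec_def)
  obtain k where k: "homog k g1" "homog k g2" using homog_reduced by blast
  let ?l = "point_factor (w$1) (w$2)"
  have "h * ?l dvd h * g1" "h * ?l dvd h * g2"
    using point_factor_dvd_homog[OF k(1) zero(1)] point_factor_dvd_homog[OF k(2) zero(2)]
      assms by (simp_all add: vec2_nonzero_iff)
  hence "h * ?l dvd h * 1" by (simp add: g1_def g2_def h_def)
  hence "?l dvd 1" using h_nonzero by (metis dvd_mult_cancel_left mult.right_neutral)
  thus False using point_factor_not_unit by blast
qed

lemma delta_proj: "v \<noteq> 0 \<Longrightarrow> delta f1 f2 (proj v) = proj (endo g1 g2 v)"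
  using homog_reduced rep_factor_nonzero
  by (auto simp: delta_eq rep_proj endo_homog_smult proj_smult)

text \<open>Comparing \<open>f(g w) = g f(w)\<close> with \<open>f = h (g\<^sub>1, g\<^sub>2)\<close> shows that \<open>h(g w)\<close> kills the determinant
  below; since \<open>h \<circ> g\<close> is a nonzero polynomial, the determinant vanishes identically.\<close>

lemma det2_reduced_commute:
  assumes g: "invertible g" and commute: "\<And>w. endo f1 f2 (g *v w) = g *v endo f1 f2 w"
  shows "det2 (endo g1 g2 (g *v w)) (g *v endo g1 g2 w) = 0"
proof -
  define C where "C i j = ([:[:g$i$j:]:] :: bipoly)" for i j
  define Phi where "Phi = lin_subst g g1 * (C 2 1 * g1 + C 2 2 * g2)
      - lin_subst g g2 * (C 1 1 * g1 + C 1 2 * g2)"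
  have ev_Phi: "ev_vec Phi u = det2 (endo g1 g2 (g *v u)) (g *v endo g1 g2 u)" for u
    by (simp add: Phi_def C_def ev_vec_lin_subst det2_def matrix_vector_mult_nth)
  have "ev_vec (lin_subst g h * Phi) u = 0" for u
  proof -
    have "ev_vec h (g *v u) *s endo g1 g2 (g *v u) = ev_vec h u *s (g *v endo g1 g2 u)"
      using commute[of u] by (simp add: endo_factor vector_scalar_commute)
    hence "ev_vec h (g *v u) * det2 (endo g1 g2 (g *v u)) (g *v endo g1 g2 u)
        = ev_vec h u * det2 (g *v endo g1 g2 u) (g *v endo g1 g2 u)"
      by (metis det2_smult(2))
    thus ?thesis by (simp add: ev_vec_lin_subst ev_Phi)
  qed
  hence "lin_subst g h * Phi = 0" by (rule bipoly_eq_0_if_ev_vec_eq_0)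
  hence "Phi = 0" using lin_subst_nonzero[OF g h_nonzero] by simp
  thus ?thesis using ev_Phi[of w] by (simp add: ev_vec_def)
qed

theorem equivariant:
  assumes "pgl_subgroup H" "fixed_by (sl_preimage H) (endo f1 f2)"
  shows "pgl_equivariant H (delta f1 f2)"
  unfolding pgl_equivariant_def
proof (intro ballI allI)
  fix X q assume "X \<in> H"
  hence "X \<in> PGL2" using assms(1) unfolding pgl_subgroup_def by blast
  then obtain g where g: "det g = 1" "pgl_class g = X" using PGL2_has_SL2_rep by blast
  hence inv: "invertible g" by (simp add: invertible_det_nz)
  have "g \<in> sl_preimage H" using g \<open>X \<in> H\<close> by (simp add: sl_preimage_def)
  hence commute: "endo f1 f2 (g *v w) = g *v endo f1 f2 w" for w
    using fixed_by_commute[OF assms(2) _ inv] by blast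
  let ?v = "endo g1 g2 (rep q)"
  have "?v \<noteq> 0" by (rule reduced_nonzero[OF rep_nonzero])
  have "delta f1 f2 (pgl_act X q) = proj (endo g1 g2 (g *v rep q))"
    unfolding g(2)[symmetric] pgl_act_class
    by (rule delta_proj[OF invertible_mult_nonzero[OF inv rep_nonzero]])
  also have "\<dots> = proj (g *v ?v)"
    using det2_reduced_commute[OF inv commute] invertible_mult_nonzero[OF inv] rep_nonzero
      reduced_nonzero by (simp add: proj_eq_iff_det2)
  also have "\<dots> = pgl_act X (delta f1 f2 q)"
    using \<open>?v \<noteq> 0\<close> rep_factor_nonzero
    by (simp add: g(2)[symmetric] pgl_act_class delta_eq rep_proj vector_scalar_commute proj_smult)
  finally show "delta f1 f2 (pgl_act X q) = pgl_act X (delta f1 f2 q)" .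
qed

lemma fixed_point_in_zero_locus:
  assumes "delta f1 f2 q = q"
  shows "q \<in> zero_locus f1 f2"
proof -
  have "proj (endo g1 g2 (rep q)) = proj (rep q)" using assms by (simp add: delta_eq)
  hence "det2 (endo g1 g2 (rep q)) (rep q) = 0"
    using proj_eq_iff_det2 reduced_nonzero rep_nonzero by blast
  hence "det2 (rep q) (endo f1 f2 (rep q)) = 0"
    by (simp add: endo_factor det2_smult det2_swap[of "rep q" "endo g1 g2 (rep q)"])
  thus ?thesis using zero_locus_iff_det2[OF homog1 homog2] by blast
qed

lemma delta_fixes_eigenvector:
  assumes "v \<noteq> 0" "c \<noteq> 0" "endo f1 f2 v = c *s v"
  shows "delta f1 f2 (proj v) = proj v"
proof -
  have eq: "ev_vec h v *s endo g1 g2 v = c *s v" using assms(3) by (simp add: endo_factor)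
  hence "ev_vec h v \<noteq> 0" using assms(1,2) by (auto simp: vec2_eq_iff vec2_nonzero_iff)
  hence "endo g1 g2 v = (c / ev_vec h v) *s v" using eq by (simp add: vec2_eq_iff field_simps)
  thus ?thesis using assms(1,2) \<open>ev_vec h v \<noteq> 0\<close> by (simp add: delta_proj proj_smult)
qed

lemma delta_has_fixed_point: "\<exists>q. delta f1 f2 q = q"
proof -
  obtain k where k: "homog k g1" "homog k g2" using homog_reduced by blast
  have "homog (k + 1) (g1 * linear_form 0 1 - g2 * linear_form 1 0)"
    by (intro homog_diff homog_mult k homog_linear_form)
  then obtain a b where ab: "a \<noteq> 0 \<or> b \<noteq> 0" "ev2 (g1 * linear_form 0 1 - g2 * linear_form 1 0) a b = 0"
    using homog_has_zero[OF _ le_add2] by blast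
  define v :: vec2 where "v = vector [a, b]"
  have "v \<noteq> 0" using ab(1) by (simp add: v_def vec2_nonzero_iff)
  moreover have "det2 (endo g1 g2 v) v = 0"
    using ab(2) by (simp add: v_def det2_def ev_vec_def mult.commute)
  ultimately have "proj (endo g1 g2 v) = proj v"
    using proj_eq_iff_det2 reduced_nonzero by blast
  thus ?thesis using delta_proj[OF \<open>v \<noteq> 0\<close>] by metis
qed

lemma fixed_points_eq_orbit:
  assumes H: "pgl_subgroup H" and fixed: "fixed_by (sl_preimage H) (endo f1 f2)"
    and orbit: "zero_locus f1 f2 = (\<lambda>X. pgl_act X q0) ` H"
  shows "zero_locus f1 f2 = {q. delta f1 f2 q = q}"
proof
  show "{q. delta f1 f2 q = q} \<subseteq> zero_locus f1 f2" using fixed_point_in_zero_locus by blast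
next
  have move: "delta f1 f2 (pgl_act X p) = pgl_act X p" if "X \<in> H" "delta f1 f2 p = p" for X p
    using equivariant[OF H fixed] that unfolding pgl_equivariant_def by metis
  obtain q1 where q1: "delta f1 f2 q1 = q1" using delta_has_fixed_point by blast
  then obtain X where X: "X \<in> H" "q1 = pgl_act X q0"
    using fixed_point_in_zero_locus orbit by blast
  have "X \<in> PGL2" using X(1) H unfolding pgl_subgroup_def by blast
  hence "q0 = pgl_act (pgl_inv X) q1" using X(2) pgl_act_inv by simp
  moreover have "pgl_inv X \<in> H" using X(1) H unfolding pgl_subgroup_def by blast
  ultimately have "delta f1 f2 q0 = q0" using move q1 by metis
  thus "zero_locus f1 f2 \<subseteq> {q. delta f1 f2 q = q}" using orbit move by auto
qed

end

lemma zero_locus_0_0: "zero_locus 0 0 = UNIV"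
  unfolding zero_locus_def using rep_nonzero by (auto intro!: exI[of _ "rep _"])

lemma admissible_imp_homog_pair:
  assumes "admissible H \<Lambda> f1 f2" "finite \<Lambda>"
  shows "\<exists>d. homog_pair f1 f2 d"
proof -
  have "f1 \<noteq> 0 \<or> f2 \<noteq> 0"
    using assms infinite_P1 zero_locus_0_0 unfolding admissible_def by auto
  thus ?thesis using assms(1) unfolding admissible_def homog_pair_def by blast
qed

lemma admissible_equivariant:
  assumes "admissible H \<Lambda> f1 f2" "finite \<Lambda>" "pgl_subgroup H"
  shows "pgl_equivariant H (delta f1 f2)"
proof -
  obtain d where "homog_pair f1 f2 d" using admissible_imp_homog_pair[OF assms(1,2)] by blast
  thus ?thesis using homog_pair.equivariant assms(1,3) unfolding admissible_def by blast
qed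

lemma admissible_single_orbit_fixed:
  assumes "admissible H \<Lambda> f1 f2" "finite \<Lambda>" "pgl_subgroup H"
    and "\<Lambda> = (\<lambda>X. pgl_act X q0) ` H"
  shows "\<Lambda> = {q. delta f1 f2 q = q}"
proof -
  obtain d where pair: "homog_pair f1 f2 d" using admissible_imp_homog_pair[OF assms(1,2)] by blast
  have fixed: "fixed_by (sl_preimage H) (endo f1 f2)" and zero_locus: "\<Lambda> = zero_locus f1 f2"
    using assms(1) unfolding admissible_def by simp_all
  show ?thesis
    using homog_pair.fixed_points_eq_orbit[OF pair assms(3) fixed, of q0] zero_locus assms(4) by simp
qed

section \<open>An invariant pair with prescribed zero locus\<close>

lemma root_of_unity_if_finite_powers:
  fixes z :: "'a::field"
  assumes "finite (range (\<lambda>k::nat. z ^ k))" "z \<noteq> 0"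
  shows "\<exists>e>0. z ^ e = 1"
proof -
  have "\<not> inj (\<lambda>k::nat. z ^ k)" using assms(1) finite_imageD infinite_UNIV_nat by blast
  then obtain a b where "a < b" "z ^ a = z ^ b"
    unfolding inj_def by (metis linorder_neqE_nat)
  moreover from this have "z ^ b = z ^ a * z ^ (b - a)"
    by (metis le_add_diff_inverse less_imp_le power_add)
  ultimately show ?thesis using assms(2) by (intro exI[of _ "b - a"]) simp
qed

lemma common_exponent:
  fixes f :: "'b \<Rightarrow> 'a::comm_monoid_mult"
  assumes "finite S" "\<forall>s\<in>S. \<exists>e>0. f s ^ e = 1"
  shows "\<exists>m. \<forall>s\<in>S. f s ^ Suc m = 1"
proof -
  obtain e where e: "\<forall>s\<in>S. e s > 0 \<and> f s ^ e s = 1" using assms(2) by metis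
  have "f s ^ prod e S = 1" if "s \<in> S" for s
    using e that assms(1) by (simp add: prod.remove power_mult)
  moreover have "prod e S > 0" using e by (simp add: prod_pos)
  ultimately show ?thesis by (intro exI[of _ "prod e S - 1"]) simp
qed

definition vanishing_form :: "complex option \<Rightarrow> bipoly" where
  "vanishing_form \<mu> = linear_form (rep \<mu> $ 2) (- rep \<mu> $ 1)"

lemma ev_vec_vanishing_form [simp]: "ev_vec (vanishing_form \<mu>) v = det2 v (rep \<mu>)"
  by (simp add: vanishing_form_def ev_vec_def det2_def algebra_simps)

lemma homog_vanishing_form: "homog 1 (vanishing_form \<mu>)"
  unfolding vanishing_form_def by (rule homog_linear_form)

locale invariant_set =
  fixes H :: "(complex^2^2) set set" and \<Lambda> :: "complex option set"
  assumes subgroup: "pgl_subgroup H" and finite_H: "finite H"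
    and finite_\<Lambda>: "finite \<Lambda>" and nonempty: "\<Lambda> \<noteq> {}"
    and invariant: "\<forall>X\<in>H. \<forall>q\<in>\<Lambda>. pgl_act X q \<in> \<Lambda>"
begin

abbreviation "G \<equiv> sl_preimage H"

lemma G_invertible: "g \<in> G \<Longrightarrow> invertible g"
  by (simp add: sl_preimage_def invertible_det_nz)

lemma G_acts:
  assumes "g \<in> G" "\<mu> \<in> \<Lambda>"
  shows "proj (g *v rep \<mu>) \<in> \<Lambda>"
proof -
  have "pgl_class g \<in> H" using assms(1) by (simp add: sl_preimage_def)
  hence "pgl_act (pgl_class g) \<mu> \<in> \<Lambda>" using invariant assms(2) by blast
  thus ?thesis by (simp add: pgl_act_class)
qed

lemma G_mult:
  assumes "g \<in> G" "g' \<in> G"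
  shows "g ** g' \<in> G"
proof -
  have "pgl_mul (pgl_class g) (pgl_class g') \<in> H"
    using assms subgroup unfolding pgl_subgroup_def sl_preimage_def by blast
  thus ?thesis using assms by (simp add: sl_preimage_def det_mul pgl_mul_class)
qed

lemma finite_G: "finite G"
proof -
  have "finite {A\<in>X. det A = 1}" if "X \<in> H" for X
  proof -
    have "X \<in> PGL2" using that subgroup unfolding pgl_subgroup_def by blast
    then obtain M where M: "invertible M" "X = pgl_class M" unfolding PGL2_def by blast
    have det: "det M \<noteq> 0" using M(1) by (simp add: invertible_det_nz)
    define r where "r = csqrt (1 / det M)"
    have r: "r ^ 2 = 1 / det M" by (simp add: r_def)
    have "{A\<in>X. det A = 1} \<subseteq> (\<lambda>c. smat c M) ` {r, -r}"
    proof
      fix A assume "A \<in> {A\<in>X. det A = 1}"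
      hence "A \<in> pgl_class M" "det A = 1" using M(2) by auto
      then obtain c where c: "A = smat c M" "det A = 1"
        unfolding pgl_class_altdef by blast
      hence "det M * c ^ 2 = det M * r ^ 2" using det r by (simp add: det_smat field_simps)
      hence "c ^ 2 = r ^ 2" using det by simp
      hence "c = r \<or> c = - r" by (simp add: power2_eq_iff)
      thus "A \<in> (\<lambda>c. smat c M) ` {r, -r}" using c by auto
    qed
    thus ?thesis using finite_subset by blast
  qed
  moreover have "G \<subseteq> (\<Union>X\<in>H. {A\<in>X. det A = 1})" by (auto simp: sl_preimage_def in_pgl_class)
  ultimately show ?thesis using finite_H by (meson finite_UN_I finite_subset)
qed

definition lam_poly :: bipoly where
  "lam_poly = (\<Prod>\<mu>\<in>\<Lambda>. vanishing_form \<mu>)"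

definition lam_field :: "vec2 \<Rightarrow> vec2" where
  "lam_field w = (\<Sum>\<nu>\<in>\<Lambda>. (\<Prod>\<mu>\<in>\<Lambda> - {\<nu>}. det2 w (rep \<mu>)) *s rep \<nu>)"

definition lam_field_poly :: "2 \<Rightarrow> bipoly" where
  "lam_field_poly i = (\<Sum>\<nu>\<in>\<Lambda>. (\<Prod>\<mu>\<in>\<Lambda> - {\<nu>}. vanishing_form \<mu>) * [:[:rep \<nu> $ i:]:])"

lemma ev_vec_lam_poly: "ev_vec lam_poly w = (\<Prod>\<mu>\<in>\<Lambda>. det2 w (rep \<mu>))"
  by (simp add: lam_poly_def)

lemma endo_lam_field_poly: "endo (lam_field_poly 1) (lam_field_poly 2) w = lam_field w"
  by (simp add: vec2_eq_iff lam_field_poly_def lam_field_def mult.commute)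

lemma lam_poly_eq_0_iff: "w \<noteq> 0 \<Longrightarrow> ev_vec lam_poly w = 0 \<longleftrightarrow> proj w \<in> \<Lambda>"
  by (simp add: ev_vec_lam_poly finite_\<Lambda> det2_rep_eq_0_iff)

lemma lam_poly_nonzero: "lam_poly \<noteq> 0"
proof
  assume "lam_poly = 0"
  obtain q where "q \<notin> \<Lambda>" using ex_new_if_finite[OF infinite_P1 finite_\<Lambda>] by blast
  thus False using lam_poly_eq_0_iff[OF rep_nonzero, of q] \<open>lam_poly = 0\<close> by (simp add: ev_vec_def)
qed

lemma homog_lam_poly: "homog (card \<Lambda>) lam_poly"
  using homog_prod[OF finite_\<Lambda>, of "\<lambda>_. 1" vanishing_form] homog_vanishing_form
  by (simp add: lam_poly_def)

lemma homog_lam_field_poly: "homog (card \<Lambda> - 1) (lam_field_poly i)"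
  unfolding lam_field_poly_def
proof (rule homog_sum)
  fix \<nu> assume "\<nu> \<in> \<Lambda>"
  have "homog (\<Sum>\<mu>\<in>\<Lambda> - {\<nu>}. 1) (\<Prod>\<mu>\<in>\<Lambda> - {\<nu>}. vanishing_form \<mu>)"
    by (rule homog_prod) (use finite_\<Lambda> homog_vanishing_form in auto)
  hence "homog (card \<Lambda> - 1) (\<Prod>\<mu>\<in>\<Lambda> - {\<nu>}. vanishing_form \<mu>)"
    using \<open>\<nu> \<in> \<Lambda>\<close> finite_\<Lambda> by simp
  from homog_mult[OF this homog_const]
  show "homog (card \<Lambda> - 1) ((\<Prod>\<mu>\<in>\<Lambda> - {\<nu>}. vanishing_form \<mu>) * [:[:rep \<nu> $ i:]:])" by simp
qed

lemma lam_field_rep: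
  assumes "\<nu> \<in> \<Lambda>"
  shows "lam_field (rep \<nu>) = (\<Prod>\<mu>\<in>\<Lambda> - {\<nu>}. det2 (rep \<nu>) (rep \<mu>)) *s rep \<nu>"
    and "(\<Prod>\<mu>\<in>\<Lambda> - {\<nu>}. det2 (rep \<nu>) (rep \<mu>)) \<noteq> 0"
proof -
  have "(\<Prod>\<mu>\<in>\<Lambda> - {\<nu>'}. det2 (rep \<nu>) (rep \<mu>)) = 0" if "\<nu>' \<in> \<Lambda>" "\<nu>' \<noteq> \<nu>" for \<nu>'
    using that assms finite_\<Lambda> by (subst prod_zero_iff) (auto intro!: bexI[of _ \<nu>])
  hence "lam_field (rep \<nu>) = (\<Sum>\<nu>'\<in>\<Lambda>. if \<nu>' = \<nu> then (\<Prod>\<mu>\<in>\<Lambda> - {\<nu>}. det2 (rep \<nu>) (rep \<mu>)) *s rep \<nu> else 0)"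
    unfolding lam_field_def by (intro sum.cong) auto
  thus "lam_field (rep \<nu>) = (\<Prod>\<mu>\<in>\<Lambda> - {\<nu>}. det2 (rep \<nu>) (rep \<mu>)) *s rep \<nu>"
    using assms finite_\<Lambda> by (simp add: sum.delta')
  show "(\<Prod>\<mu>\<in>\<Lambda> - {\<nu>}. det2 (rep \<nu>) (rep \<mu>)) \<noteq> 0"
    using finite_\<Lambda> det2_rep_eq_0_iff[OF rep_nonzero] by auto
qed

lemma lam_field_poly_nonzero: "lam_field_poly 1 \<noteq> 0 \<or> lam_field_poly 2 \<noteq> 0"
proof (rule ccontr)
  obtain \<nu> where "\<nu> \<in> \<Lambda>" using nonempty by blast
  hence "lam_field (rep \<nu>) \<noteq> 0"
    using lam_field_rep rep_nonzero by (simp add: vector_mul_eq_0)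
  moreover assume "\<not> (lam_field_poly 1 \<noteq> 0 \<or> lam_field_poly 2 \<noteq> 0)"
  hence "lam_field w = 0" for w
    using endo_lam_field_poly[of w] by (simp add: vec2_eq_iff ev_vec_def)
  ultimately show False by blast
qed

lemma det2_lam_field: "det2 w (lam_field w) = of_nat (card \<Lambda>) * ev_vec lam_poly w"
proof -
  have "det2 w (lam_field w) = (\<Sum>\<nu>\<in>\<Lambda>. (\<Prod>\<mu>\<in>\<Lambda> - {\<nu>}. det2 w (rep \<mu>)) * det2 w (rep \<nu>))"
    unfolding lam_field_def det2_def by (simp add: sum_distrib_left sum_subtractf algebra_simps)
  also have "\<dots> = (\<Sum>\<nu>\<in>\<Lambda>. ev_vec lam_poly w)"
    unfolding ev_vec_lam_poly by (intro sum.cong refl) (simp add: finite_\<Lambda> prod.remove mult.commute)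
  finally show ?thesis by simp
qed

definition weight :: "mat2 \<Rightarrow> complex" where
  "weight g = (\<Prod>\<mu>\<in>\<Lambda>. 1 / rep_factor (g *v rep \<mu>))"

lemma G_permutes:
  assumes "g \<in> G"
  shows "bij_betw (\<lambda>\<mu>. proj (g *v rep \<mu>)) \<Lambda> \<Lambda>"
proof -
  have inv: "invertible g" using G_invertible assms by blast
  have "inj_on (\<lambda>\<mu>. proj (g *v rep \<mu>)) \<Lambda>"
  proof (rule inj_onI)
    fix a b assume "proj (g *v rep a) = proj (g *v rep b)"
    hence "det2 (g *v rep a) (g *v rep b) = 0"
      using proj_eq_iff_det2 invertible_mult_nonzero[OF inv rep_nonzero] by blast
    hence "det2 (rep a) (rep b) = 0"
      using assms by (simp add: det2_matrix_vector_mult sl_preimage_def)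
    thus "a = b" using proj_eq_iff_det2[OF rep_nonzero rep_nonzero] by simp
  qed
  moreover have "(\<lambda>\<mu>. proj (g *v rep \<mu>)) ` \<Lambda> \<subseteq> \<Lambda>" using G_acts assms by blast
  ultimately show ?thesis using endo_inj_surj[OF finite_\<Lambda>] by (simp add: bij_betw_def)
qed

lemma det2_G_rep:
  assumes "g \<in> G"
  shows "det2 (g *v w) (rep (proj (g *v rep \<mu>))) = 1 / rep_factor (g *v rep \<mu>) * det2 w (rep \<mu>)"
  using invertible_mult_nonzero[OF G_invertible[OF assms] rep_nonzero] assms
  by (simp add: rep_proj det2_smult det2_matrix_vector_mult sl_preimage_def)

lemma lam_poly_G:
  assumes "g \<in> G"
  shows "ev_vec lam_poly (g *v w) = weight g * ev_vec lam_poly w"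
proof -
  have "ev_vec lam_poly (g *v w) = (\<Prod>\<mu>\<in>\<Lambda>. det2 (g *v w) (rep (proj (g *v rep \<mu>))))"
    unfolding ev_vec_lam_poly
    using prod.reindex_bij_betw[OF G_permutes[OF assms], of "\<lambda>\<mu>. det2 (g *v w) (rep \<mu>)"] by simp
  also have "\<dots> = (\<Prod>\<mu>\<in>\<Lambda>. 1 / rep_factor (g *v rep \<mu>) * det2 w (rep \<mu>))"
    by (simp only: det2_G_rep[OF assms])
  also have "\<dots> = weight g * ev_vec lam_poly w"
    by (simp only: prod.distrib weight_def ev_vec_lam_poly)
  finally show ?thesis .
qed

lemma lam_field_G:
  assumes g: "g \<in> G"
  shows "lam_field (g *v w) = weight g *s (g *v lam_field w)"
proof -
  define \<sigma> where "\<sigma> \<mu> = proj (g *v rep \<mu>)" for \<mu>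
  define s where "s \<mu> = 1 / rep_factor (g *v rep \<mu>)" for \<mu>
  have bij: "bij_betw \<sigma> \<Lambda> \<Lambda>" using G_permutes[OF g] by (simp add: \<sigma>_def[abs_def])
  have rep_\<sigma>: "rep (\<sigma> \<mu>) = s \<mu> *s (g *v rep \<mu>)" for \<mu>
    using invertible_mult_nonzero[OF G_invertible[OF g] rep_nonzero]
    by (simp add: \<sigma>_def s_def rep_proj)
  have summand: "(\<Prod>\<mu>\<in>\<Lambda> - {\<sigma> \<nu>}. det2 (g *v w) (rep \<mu>)) *s rep (\<sigma> \<nu>) =
      weight g *s ((\<Prod>\<mu>\<in>\<Lambda> - {\<nu>}. det2 w (rep \<mu>)) *s (g *v rep \<nu>))" if "\<nu> \<in> \<Lambda>" for \<nu>
  proof -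
    have "bij_betw \<sigma> (\<Lambda> - {\<nu>}) (\<Lambda> - {\<sigma> \<nu>})"
      by (rule bij_betw_DiffI[OF bij]) (use that bij in \<open>auto simp: bij_betw_def\<close>)
    from prod.reindex_bij_betw[OF this, of "\<lambda>\<mu>. det2 (g *v w) (rep \<mu>)"]
    have "(\<Prod>\<mu>\<in>\<Lambda> - {\<sigma> \<nu>}. det2 (g *v w) (rep \<mu>)) =
        (\<Prod>\<mu>\<in>\<Lambda> - {\<nu>}. s \<mu> * det2 w (rep \<mu>))"
      by (simp only: \<sigma>_def s_def det2_G_rep[OF g])
    also have "\<dots> = (\<Prod>\<mu>\<in>\<Lambda> - {\<nu>}. s \<mu>) * (\<Prod>\<mu>\<in>\<Lambda> - {\<nu>}. det2 w (rep \<mu>))"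
      by (rule prod.distrib)
    moreover have "weight g = s \<nu> * (\<Prod>\<mu>\<in>\<Lambda> - {\<nu>}. s \<mu>)"
      using that finite_\<Lambda> by (simp add: weight_def s_def prod.remove)
    ultimately show ?thesis by (simp add: rep_\<sigma> vec2_eq_iff mult_ac)
  qed
  have "lam_field (g *v w) = (\<Sum>\<nu>\<in>\<Lambda>. (\<Prod>\<mu>\<in>\<Lambda> - {\<sigma> \<nu>}. det2 (g *v w) (rep \<mu>)) *s rep (\<sigma> \<nu>))"
    unfolding lam_field_def
    using sum.reindex_bij_betw[OF bij, of "\<lambda>\<nu>. (\<Prod>\<mu>\<in>\<Lambda> - {\<nu>}. det2 (g *v w) (rep \<mu>)) *s rep \<nu>"]
    by simp
  also have "\<dots> = (\<Sum>\<nu>\<in>\<Lambda>. weight g *s ((\<Prod>\<mu>\<in>\<Lambda> - {\<nu>}. det2 w (rep \<mu>)) *s (g *v rep \<nu>)))"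
    by (rule sum.cong) (simp_all add: summand)
  also have "\<dots> = weight g *s (g *v lam_field w)"
    unfolding lam_field_def
    by (simp add: vec2_eq_iff matrix_vector_mult_nth sum_distrib_left sum.distrib algebra_simps)
  finally show ?thesis .
qed

lemma weight_nonzero: "g \<in> G \<Longrightarrow> weight g \<noteq> 0"
  by (simp add: weight_def finite_\<Lambda> rep_factor_nonzero invertible_mult_nonzero G_invertible rep_nonzero)

lemma weight_mult:
  assumes "g \<in> G" "g' \<in> G"
  shows "weight (g ** g') = weight g * weight g'"
proof -
  obtain w where w: "ev_vec lam_poly w \<noteq> 0"
    using lam_poly_nonzero bipoly_eq_0_if_ev_vec_eq_0 by blast
  have "weight (g ** g') * ev_vec lam_poly w = ev_vec lam_poly (g *v (g' *v w))"
    using lam_poly_G[OF G_mult[OF assms]] by (simp add: matrix_vector_mul_assoc)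
  also have "\<dots> = weight g * weight g' * ev_vec lam_poly w"
    by (simp add: lam_poly_G assms)
  finally show ?thesis using w by simp
qed

lemma weight_exponent: "\<exists>m. \<forall>g\<in>G. weight g ^ Suc m = 1"
proof (rule common_exponent[OF finite_G], intro ballI root_of_unity_if_finite_powers)
  fix g assume g: "g \<in> G"
  show "weight g \<noteq> 0" by (rule weight_nonzero[OF g])
  have "weight g ^ Suc k \<in> weight ` G" for k
  proof (induction k)
    case (Suc k)
    then obtain g' where "g' \<in> G" "weight g ^ Suc k = weight g'" by blast
    hence "weight g ^ Suc (Suc k) = weight (g ** g')" by (simp add: weight_mult g)
    thus ?case using G_mult[OF g \<open>g' \<in> G\<close>] by blast
  qed (use g in simp)
  hence "weight g ^ k \<in> insert 1 (weight ` G)" for k by (cases k) simp_all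
  hence "range (\<lambda>k. weight g ^ k) \<subseteq> insert 1 (weight ` G)" by blast
  thus "finite (range (\<lambda>k. weight g ^ k))" using finite_G finite_subset by blast
qed

definition lam_pair :: "nat \<Rightarrow> 2 \<Rightarrow> bipoly" where
  "lam_pair m i = lam_poly ^ m * lam_field_poly i"

lemma endo_lam_pair: "endo (lam_pair m 1) (lam_pair m 2) w = ev_vec lam_poly w ^ m *s lam_field w"
  using endo_lam_field_poly[of w] by (simp add: lam_pair_def vec2_eq_iff)

lemma lam_pair_homog_pair: "homog_pair (lam_pair m 1) (lam_pair m 2) (m * card \<Lambda> + (card \<Lambda> - 1))"
proof -
  have "homog (m * card \<Lambda> + (card \<Lambda> - 1)) (lam_pair m i)" for i
    unfolding lam_pair_def by (rule homog_mult[OF homog_power[OF homog_lam_poly] homog_lam_field_poly])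
  thus ?thesis
    using lam_poly_nonzero lam_field_poly_nonzero by unfold_locales (auto simp: lam_pair_def)
qed

text \<open>Here \<open>weight g\<^sup>m\<^sup>+\<^sup>1 = 1\<close> cancels the character picked up by \<open>P\<^sup>m F\<close>.\<close>

lemma lam_pair_fixed:
  assumes "\<forall>g\<in>G. weight g ^ Suc m = 1"
  shows "fixed_by G (endo (lam_pair m 1) (lam_pair m 2))"
  unfolding fixed_by_def
proof (intro ballI allI)
  fix g v assume g: "g \<in> G"
  have "endo (lam_pair m 1) (lam_pair m 2) (g *v u) = g *v endo (lam_pair m 1) (lam_pair m 2) u" for u
    using assms g unfolding endo_lam_pair lam_poly_G[OF g] lam_field_G[OF g]
    by (simp add: vector_scalar_commute power_mult_distrib vec2_eq_iff mult_ac)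
  thus "g *v endo (lam_pair m 1) (lam_pair m 2) (matrix_inv g *v v) = endo (lam_pair m 1) (lam_pair m 2) v"
    by (metis matrix_inv_cancel(1) G_invertible[OF g])
qed

lemma zero_locus_lam_pair: "zero_locus (lam_pair m 1) (lam_pair m 2) = \<Lambda>"
proof -
  interpret homog_pair "lam_pair m 1" "lam_pair m 2" "m * card \<Lambda> + (card \<Lambda> - 1)"
    by (rule lam_pair_homog_pair)
  have "card \<Lambda> \<noteq> 0" using finite_\<Lambda> nonempty by simp
  hence "q \<in> zero_locus (lam_pair m 1) (lam_pair m 2) \<longleftrightarrow> ev_vec lam_poly (rep q) = 0" for q
    by (auto simp: zero_locus_iff_det2[OF homog1 homog2] endo_lam_pair det2_smult det2_lam_field)
  thus ?thesis using lam_poly_eq_0_iff[OF rep_nonzero] by auto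
qed

lemma lam_pair_admissible:
  "\<forall>g\<in>G. weight g ^ Suc m = 1 \<Longrightarrow> admissible H \<Lambda> (lam_pair m 1) (lam_pair m 2)"
  unfolding admissible_def using lam_pair_homog_pair lam_pair_fixed zero_locus_lam_pair
  by (auto simp: homog_pair_def)

lemma fixed_points_lam_pair: "{q. delta (lam_pair m 1) (lam_pair m 2) q = q} = \<Lambda>"
proof -
  have "delta (lam_pair m 1) (lam_pair m 2) = delta (lam_pair 0 1) (lam_pair 0 2)"
    using delta_mult_left[of "lam_poly ^ m" "lam_pair 0 1" "lam_pair 0 2"] lam_poly_nonzero
    by (simp add: lam_pair_def)
  moreover have "delta (lam_pair 0 1) (lam_pair 0 2) \<nu> = \<nu>" if "\<nu> \<in> \<Lambda>" for \<nu>
    using homog_pair.delta_fixes_eigenvector[OF lam_pair_homog_pair rep_nonzero lam_field_rep(2)[OF that]]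
      lam_field_rep(1)[OF that] by (simp add: endo_lam_pair)
  moreover have "q \<in> \<Lambda>" if "delta (lam_pair m 1) (lam_pair m 2) q = q" for q
    using homog_pair.fixed_point_in_zero_locus[OF lam_pair_homog_pair that] zero_locus_lam_pair
    by simp
  ultimately show ?thesis by auto
qed

end

theorem mainTheorem11:
  fixes H :: "(complex^2^2) set set" and \<Lambda> :: "complex option set"
  assumes "pgl_subgroup H" and "finite H"
    and "finite \<Lambda>" and "\<Lambda> \<noteq> {}"
    and "\<forall>X\<in>H. \<forall>q\<in>\<Lambda>. pgl_act X q \<in> \<Lambda>"
  shows "(\<exists>f1 f2. admissible H \<Lambda> f1 f2)
    \<and> (\<forall>f1 f2. admissible H \<Lambda> f1 f2 \<longrightarrow> pgl_equivariant H (delta f1 f2))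
    \<and> (\<exists>f1 f2. admissible H \<Lambda> f1 f2 \<and> \<Lambda> = {q. delta f1 f2 q = q})
    \<and> ((\<exists>q0. \<Lambda> = (\<lambda>X. pgl_act X q0) ` H) \<longrightarrow>
         (\<forall>f1 f2. admissible H \<Lambda> f1 f2 \<longrightarrow> \<Lambda> = {q. delta f1 f2 q = q}))"
proof -
  interpret invariant_set H \<Lambda> using assms by unfold_locales
  obtain m where m: "\<forall>g\<in>G. weight g ^ Suc m = 1" using weight_exponent by blast
  show ?thesis
  proof (intro conjI allI impI)
    show "\<exists>f1 f2. admissible H \<Lambda> f1 f2" using lam_pair_admissible[OF m] by blast
  next
    fix f1 f2 assume "admissible H \<Lambda> f1 f2"
    thus "pgl_equivariant H (delta f1 f2)" using admissible_equivariant assms(1,3) by blast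
  next
    have "admissible H \<Lambda> (lam_pair m 1) (lam_pair m 2) \<and> \<Lambda> = {q. delta (lam_pair m 1) (lam_pair m 2) q = q}"
      using lam_pair_admissible[OF m] fixed_points_lam_pair by simp
    thus "\<exists>f1 f2. admissible H \<Lambda> f1 f2 \<and> \<Lambda> = {q. delta f1 f2 q = q}" by blast
  next
    fix f1 f2 assume "\<exists>q0. \<Lambda> = (\<lambda>X. pgl_act X q0) ` H" "admissible H \<Lambda> f1 f2"
    thus "\<Lambda> = {q. delta f1 f2 q = q}" using admissible_single_orbit_fixed assms(1,3) by blast
  qed
qed

end
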